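(* Let $\varphi$ be an $\mathcal L$-sentence with $\mathbb N\models\Pi(\ulcorner\varphi\urcorner)$, and let $\alpha$ be an ordinal such that $(T_\alpha,P_\alpha)$ is consistent. Then both sequents $\varphi\Rightarrow\neg\mathrm T\varphi$ and $\neg\mathrm T\varphi\Rightarrow\varphi$ hold in $(\mathbb N,T_\alpha,P_\alpha)$.
   Context: Language. Let $\mathcal L_{\mathbb N}$ be the language of first-order Peano arithmetic and $\mathcal L=\mathcal L_{\mathbb N}\cup\{\mathrm T,\mathrm P\}$ with unary predicates $\mathrm T,\mathrm P$. $\mathcal L$-formulas are in Tait style: literals are $s=t$, $s\neq t$, $\mathrm Tt$, $\neg\mathrm Tt$, $\mathrm Pt$, $\neg\mathrm Pt$; formulas are built from literals by $\wedge,\vee,\forall,\exists$; negation of an arbitrary formula is defined by De Morgan dualities with $\neg\neg\varphi:=\varphi$. A standard Gödel numbering is fixed; $\#e$ is the code of $e$, $\ulcorner e\urcorner$ the numeral of $\#e$, $\mathrm{val}(t)$ the value of a closed term $t$, $\dot\neg$ the primitive recursive function with $\dot\neg(\#\varphi)=\#\neg\varphi$; $\mathrm T\varphi,\mathrm P\varphi$ abbreviate $\mathrm T\ulcorner\varphi\urcorner,\mathrm P\ulcorner\varphi\urcorner$. Semantics. A partial model is $(\mathbb N,T,P)$ with $\mathbb N$ the standard model and $T=(T^+,T^-)$, $P=(P^+,P^-)$ pairs of subsets of $\omega$. Strong Kleene satisfaction $\models_{SK}$: arithmetic literals evaluated in $\mathbb N$; $\mathrm Tt$ satisfied iff $\mathrm{val}(t)\in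 T^+$, $\neg\mathrm Tt$ iff $\mathrm{val}(t)\in T^-$, likewise for $\mathrm P$ with $P^\pm$; conjunction iff both, disjunction iff at least one, $\forall x\varphi(x)$ iff all numeral instances, $\exists x\varphi(x)$ iff some numeral instance. A sequent $\Gamma\Rightarrow\Delta$ of sentences holds in $(\mathbb N,T,P)$ iff, whenever all members of $\Gamma$ are satisfied, some member of $\Delta$ is. $(T,P)$ is consistent iff $T^+\cap T^-=\emptyset$ and $P^+\cap P^-=\emptyset$. Base paradoxicality. $\mathrm{PA}[\mathrm{SK}]$ is the two-sided sequent calculus for Strong Kleene logic with identity in $\mathcal L$ (initial sequents $\varphi\Rightarrow\varphi$, cut, weakening, the rule from $\Gamma\Rightarrow\Delta,\varphi$ infer $\neg\varphi,\Gamma\Rightarrow\Delta$, usual rules for $\wedge,\vee,\forall,\exists$, reflexivity $\Rightarrow t=t$, replacement from $\Gamma\Rightarrow\Delta,\varphi(t)$ infer $\Gamma\Rightarrow\Delta,s\neq t,\varphi(s)$) plus the initial sequents of Peano arithmetic and the induction rule for all $\mathcal L$-formulas. A sentence $\varphi$ is base paradoxical iff $\mathrm{PA}[\mathrm{SK}]$ derives $\varphi\Leftrightarrow\neg\mathrm T\varphi$ and $\neg\varphi\Leftrightarrow\mathrm T\varphi$ ($\Leftrightarrow$ meaning both sequents). $B(x)$ is an $\mathcal L_{\mathbb N}$-formula defining in $\mathbb N$ the set of codes of base paradoxical sentences, and $\Pi(x):=B(x)\vee B(\dot\neg x)$. Jump and sequence. Let $\mathscr P(x)$ be the $\mathcal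 L$-formula which is the disjunction of: (1) $x$ codes a sentence and $\Pi(x)$; (2) $x$ codes a sentence $\mathrm Tt$ ($t$ a closed term) and $\mathrm P(\mathrm{val}(t))$; (3) $x$ codes a sentence $\neg\mathrm Tt$ and $\mathrm P(\mathrm{val}(t))$; (4) $x$ codes a sentence $\psi\wedge\theta$ and $(\mathrm P\psi\wedge\mathrm P\theta)\vee(\mathrm T\psi\wedge\mathrm P\theta)\vee(\mathrm T\theta\wedge\mathrm P\psi)$; (5) $x$ codes a sentence $\psi\vee\theta$ and $(\mathrm P\psi\wedge\mathrm P\theta)\vee(\neg\mathrm T\psi\wedge\mathrm P\theta)\vee(\neg\mathrm T\theta\wedge\mathrm P\psi)$; (6) $x$ codes a sentence $\forall v\psi$ and $\exists y\,\mathrm P\psi(\dot y)\wedge\forall y(\mathrm P\psi(\dot y)\vee\mathrm T\psi(\dot y))$; (7) $x$ codes a sentence $\exists v\psi$ and $\exists y\,\mathrm P\psi(\dot y)\wedge\forall y(\mathrm P\psi(\dot y)\vee\neg\mathrm T\psi(\dot y))$; here $\psi(\dot y)$ is the code of the result of substituting the numeral of $y$ for $v$. Write $\mathscr P(\varphi)$ for $\mathscr P(\ulcorner\varphi\urcorner)$. Define $\Gamma_{\mathscr{TP}}(T,P)=\big((\{\#\varphi:(\mathbb N,T,P)\models_{SK}\varphi\},\{\#\varphi:(\mathbb N,T,P)\models_{SK}\neg\varphi\}),(\{\#\varphi:(\mathbb N,T,P)\models_{SK}\mathscr P(\varphi)\},\{\#\varphi:(\mathbb N,T,P)\models_{SK}\varphi\vee\neg\varphi\})\big)$,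 $\varphi$ ranging over $\mathcal L$-sentences. Define $(T_0,P_0)=((\emptyset,\emptyset),(\emptyset,\emptyset))$, $(T_{\beta+1},P_{\beta+1})=\Gamma_{\mathscr{TP}}(T_\beta,P_\beta)$, $(T_\lambda,P_\lambda)=\bigcup_{\beta<\lambda}(T_\beta,P_\beta)$ (componentwise union) for limit $\lambda$. *)

theory Defs
  imports Main "HOL-Library.Nat_Bijection"
begin

datatype trm = Var nat | Zer | Sc trm | Pl trm trm | Tm trm trm

datatype fm =
    Eq trm trm | Neq trm trm
  | Tr trm | NTr trm
  | Pr trm | NPr trm
  | Conj fm fm | Disj fm fm
  | All nat fm | Ex nat fm

text \<open>Negation defined by De Morgan dualities (so neg (neg phi) = phi).\<close>
fun neg :: "fm \<Rightarrow> fm" where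
  "neg (Eq s t) = Neq s t"
| "neg (Neq s t) = Eq s t"
| "neg (Tr t) = NTr t"
| "neg (NTr t) = Tr t"
| "neg (Pr t) = NPr t"
| "neg (NPr t) = Pr t"
| "neg (Conj a b) = Disj (neg a) (neg b)"
| "neg (Disj a b) = Conj (neg a) (neg b)"
| "neg (All v a) = Ex v (neg a)"
| "neg (Ex v a) = All v (neg a)"

fun vars_t :: "trm \<Rightarrow> nat set" where
  "vars_t (Var n) = {n}"
| "vars_t Zer = {}"
| "vars_t (Sc t) = vars_t t"
| "vars_t (Pl s t) = vars_t s \<union> vars_t t"
| "vars_t (Tm s t) = vars_t s \<union> vars_t t"

fun fv :: "fm \<Rightarrow> nat set" where
  "fv (Eq s t) = vars_t s \<union> vars_t t"
| "fv (Neq s t) = vars_t s \<union> vars_t t"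
| "fv (Tr t) = vars_t t"
| "fv (NTr t) = vars_t t"
| "fv (Pr t) = vars_t t"
| "fv (NPr t) = vars_t t"
| "fv (Conj a b) = fv a \<union> fv b"
| "fv (Disj a b) = fv a \<union> fv b"
| "fv (All v a) = fv a - {v}"
| "fv (Ex v a) = fv a - {v}"

definition closed_trm :: "trm \<Rightarrow> bool" where
  "closed_trm t \<longleftrightarrow> vars_t t = {}"

definition sentence :: "fm \<Rightarrow> bool" where
  "sentence \<phi> \<longleftrightarrow> fv \<phi> = {}"

fun subst_t :: "nat \<Rightarrow> trm \<Rightarrow> trm \<Rightarrow> trm" where
  "subst_t v u (Var n) = (if n = v then u else Var n)"
| "subst_t v u Zer = Zer"
| "subst_t v u (Sc t) = Sc (subst_t v u t)"
| "subst_t v u (Pl s t) = Pl (subst_t v u s) (subst_t v u t)"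
| "subst_t v u (Tm s t) = Tm (subst_t v u s) (subst_t v u t)"

fun subst :: "nat \<Rightarrow> trm \<Rightarrow> fm \<Rightarrow> fm" where
  "subst v u (Eq s t) = Eq (subst_t v u s) (subst_t v u t)"
| "subst v u (Neq s t) = Neq (subst_t v u s) (subst_t v u t)"
| "subst v u (Tr t) = Tr (subst_t v u t)"
| "subst v u (NTr t) = NTr (subst_t v u t)"
| "subst v u (Pr t) = Pr (subst_t v u t)"
| "subst v u (NPr t) = NPr (subst_t v u t)"
| "subst v u (Conj a b) = Conj (subst v u a) (subst v u b)"
| "subst v u (Disj a b) = Disj (subst v u a) (subst v u b)"
| "subst v u (All w a) = (if v = w then All w a else All w (subst v u a))"
| "subst v u (Ex w a) = (if v = w then Ex w a else Ex w (subst v u a))"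

fun freefor :: "trm \<Rightarrow> nat \<Rightarrow> fm \<Rightarrow> bool" where
  "freefor u v (Conj a b) = (freefor u v a \<and> freefor u v b)"
| "freefor u v (Disj a b) = (freefor u v a \<and> freefor u v b)"
| "freefor u v (All w a) = (v \<notin> fv (All w a) \<or> (w \<notin> vars_t u \<and> freefor u v a))"
| "freefor u v (Ex w a) = (v \<notin> fv (Ex w a) \<or> (w \<notin> vars_t u \<and> freefor u v a))"
| "freefor u v _ = True"

fun code_t :: "trm \<Rightarrow> nat" where
  "code_t (Var n) = prod_encode (0, n)"
| "code_t Zer = prod_encode (1, 0)"
| "code_t (Sc t) = prod_encode (2, code_t t)"
| "code_t (Pl s t) = prod_encode (3, prod_encode (code_t s, code_t t))"
| "code_t (Tm s t) = prod_encode (4, prod_encode (code_t s, code_t t))"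

fun code :: "fm \<Rightarrow> nat" where
  "code (Eq s t) = prod_encode (0, prod_encode (code_t s, code_t t))"
| "code (Neq s t) = prod_encode (1, prod_encode (code_t s, code_t t))"
| "code (Tr t) = prod_encode (2, code_t t)"
| "code (NTr t) = prod_encode (3, code_t t)"
| "code (Pr t) = prod_encode (4, code_t t)"
| "code (NPr t) = prod_encode (5, code_t t)"
| "code (Conj a b) = prod_encode (6, prod_encode (code a, code b))"
| "code (Disj a b) = prod_encode (7, prod_encode (code a, code b))"
| "code (All v a) = prod_encode (8, prod_encode (v, code a))"
| "code (Ex v a) = prod_encode (9, prod_encode (v, code a))"

fun num :: "nat \<Rightarrow> trm" where
  "num 0 = Zer"
| "num (Suc n) = Sc (num n)"

definition quote :: "fm \<Rightarrow> trm" where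
  "quote \<phi> = num (code \<phi>)"

text \<open>Value of a term in N (variables get value 0; only used for closed terms).\<close>
fun val :: "trm \<Rightarrow> nat" where
  "val (Var n) = 0"
| "val Zer = 0"
| "val (Sc t) = Suc (val t)"
| "val (Pl s t) = val s + val t"
| "val (Tm s t) = val s * val t"

text \<open>A partial model: ((T+, T-), (P+, P-)).\<close>
type_synonym model = "(nat set \<times> nat set) \<times> (nat set \<times> nat set)"

definition Tp :: "model \<Rightarrow> nat set" where "Tp M = fst (fst M)"
definition Tn :: "model \<Rightarrow> nat set" where "Tn M = snd (fst M)"
definition Pp :: "model \<Rightarrow> nat set" where "Pp M = fst (snd M)"
definition Pn :: "model \<Rightarrow> nat set" where "Pn M = snd (snd M)"

fun fsize :: "fm \<Rightarrow> nat" where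
  "fsize (Conj a b) = fsize a + fsize b + 1"
| "fsize (Disj a b) = fsize a + fsize b + 1"
| "fsize (All v a) = fsize a + 1"
| "fsize (Ex v a) = fsize a + 1"
| "fsize _ = 1"

lemma fsize_subst [simp]: "fsize (subst v u a) = fsize a"
  by (induction a) auto

function sat :: "model \<Rightarrow> fm \<Rightarrow> bool" where
  "sat M (Eq s t) = (val s = val t)"
| "sat M (Neq s t) = (val s \<noteq> val t)"
| "sat M (Tr t) = (val t \<in> Tp M)"
| "sat M (NTr t) = (val t \<in> Tn M)"
| "sat M (Pr t) = (val t \<in> Pp M)"
| "sat M (NPr t) = (val t \<in> Pn M)"
| "sat M (Conj a b) = (sat M a \<and> sat M b)"
| "sat M (Disj a b) = (sat M a \<or> sat M b)"
| "sat M (All v a) = (\<forall>n. sat M (subst v (num n) a))"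
| "sat M (Ex v a) = (\<exists>n. sat M (subst v (num n) a))"
  by pat_completeness auto
termination by (relation "measure (\<lambda>(M, a). fsize a)") auto

definition holds :: "model \<Rightarrow> fm list \<Rightarrow> fm list \<Rightarrow> bool" where
  "holds M \<Gamma> \<Delta> \<longleftrightarrow> ((\<forall>\<phi>\<in>set \<Gamma>. sat M \<phi>) \<longrightarrow> (\<exists>\<psi>\<in>set \<Delta>. sat M \<psi>))"

definition consistent :: "model \<Rightarrow> bool" where
  "consistent M \<longleftrightarrow> Tp M \<inter> Tn M = {} \<and> Pp M \<inter> Pn M = {}"

definition fvs :: "fm set \<Rightarrow> nat set" where
  "fvs \<Gamma> = \<Union> (fv ` \<Gamma>)"

inductive pask :: "fm set \<Rightarrow> fm set \<Rightarrow> bool" where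
  init: "pask {\<phi>} {\<phi>}"
| cut: "pask \<Gamma> (insert \<phi> \<Delta>) \<Longrightarrow> pask (insert \<phi> \<Gamma>) \<Delta> \<Longrightarrow> pask \<Gamma> \<Delta>"
| weak: "pask \<Gamma> \<Delta> \<Longrightarrow> finite \<Gamma>' \<Longrightarrow> finite \<Delta>' \<Longrightarrow> pask (\<Gamma> \<union> \<Gamma>') (\<Delta> \<union> \<Delta>')"
| negL: "pask \<Gamma> (insert \<phi> \<Delta>) \<Longrightarrow> pask (insert (neg \<phi>) \<Gamma>) \<Delta>"
| conjL: "pask (insert a (insert b \<Gamma>)) \<Delta> \<Longrightarrow> pask (insert (Conj a b) \<Gamma>) \<Delta>"
| conjR: "pask \<Gamma> (insert a \<Delta>) \<Longrightarrow> pask \<Gamma> (insert b \<Delta>) \<Longrightarrow> pask \<Gamma> (insert (Conj a b) \<Delta>)"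
| disjL: "pask (insert a \<Gamma>) \<Delta> \<Longrightarrow> pask (insert b \<Gamma>) \<Delta> \<Longrightarrow> pask (insert (Disj a b) \<Gamma>) \<Delta>"
| disjR: "pask \<Gamma> (insert a (insert b \<Delta>)) \<Longrightarrow> pask \<Gamma> (insert (Disj a b) \<Delta>)"
| allL: "freefor t v a \<Longrightarrow> pask (insert (subst v t a) \<Gamma>) \<Delta> \<Longrightarrow> pask (insert (All v a) \<Gamma>) \<Delta>"
| allR: "freefor (Var w) v a \<Longrightarrow> w \<notin> fvs \<Gamma> \<Longrightarrow> w \<notin> fvs \<Delta> \<Longrightarrow> w \<notin> fv (All v a) \<Longrightarrow>
         pask \<Gamma> (insert (subst v (Var w) a) \<Delta>) \<Longrightarrow> pask \<Gamma> (insert (All v a) \<Delta>)"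
| exL: "freefor (Var w) v a \<Longrightarrow> w \<notin> fvs \<Gamma> \<Longrightarrow> w \<notin> fvs \<Delta> \<Longrightarrow> w \<notin> fv (Ex v a) \<Longrightarrow>
         pask (insert (subst v (Var w) a) \<Gamma>) \<Delta> \<Longrightarrow> pask (insert (Ex v a) \<Gamma>) \<Delta>"
| exR: "freefor t v a \<Longrightarrow> pask \<Gamma> (insert (subst v t a) \<Delta>) \<Longrightarrow> pask \<Gamma> (insert (Ex v a) \<Delta>)"
| refl: "pask {} {Eq t t}"
| repl: "freefor t v a \<Longrightarrow> freefor s v a \<Longrightarrow> pask \<Gamma> (insert (subst v t a) \<Delta>) \<Longrightarrow>
         pask \<Gamma> (insert (Neq s t) (insert (subst v s a) \<Delta>))"
| pa_succ_zero: "pask {Eq (Sc s) Zer} {}"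
| pa_succ_inj: "pask {Eq (Sc s) (Sc t)} {Eq s t}"
| pa_plus_zero: "pask {} {Eq (Pl s Zer) s}"
| pa_plus_succ: "pask {} {Eq (Pl s (Sc t)) (Sc (Pl s t))}"
| pa_times_zero: "pask {} {Eq (Tm s Zer) Zer}"
| pa_times_succ: "pask {} {Eq (Tm s (Sc t)) (Pl (Tm s t) s)}"
| pa_eq_decidable: "pask {} {Eq s t, Neq s t}"
| ind_rule: "v \<notin> fvs \<Gamma> \<Longrightarrow> v \<notin> fvs \<Delta> \<Longrightarrow> freefor t v a \<Longrightarrow> freefor (Sc (Var v)) v a \<Longrightarrow>
         pask (insert a \<Gamma>) (insert (subst v (Sc (Var v)) a) \<Delta>) \<Longrightarrow>
         pask (insert (subst v Zer a) \<Gamma>) (insert (subst v t a) \<Delta>)"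

definition base_paradoxical :: "fm \<Rightarrow> bool" where
  "base_paradoxical \<phi> \<longleftrightarrow> sentence \<phi> \<and>
     pask {\<phi>} {neg (Tr (quote \<phi>))} \<and> pask {neg (Tr (quote \<phi>))} {\<phi>} \<and>
     pask {neg \<phi>} {Tr (quote \<phi>)} \<and> pask {Tr (quote \<phi>)} {neg \<phi>}"

text \<open>N |= Pi(code phi), where B defines (the codes of) the base paradoxical sentences
  and Pi(x) = B(x) \/ B(neg x).\<close>
definition Pi :: "fm \<Rightarrow> bool" where
  "Pi \<phi> \<longleftrightarrow> base_paradoxical \<phi> \<or> base_paradoxical (neg \<phi>)"

text \<open>SK-satisfaction of the L-formula script-P(code phi) in (N,T,P), for a sentence phi,
  written out clause by clause (arithmetical parts are evaluated classically in N).\<close>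
definition Pcond :: "model \<Rightarrow> fm \<Rightarrow> bool" where
  "Pcond M \<phi> \<longleftrightarrow> Pi \<phi> \<or>
    (case \<phi> of
       Tr t \<Rightarrow> val t \<in> Pp M
     | NTr t \<Rightarrow> val t \<in> Pp M
     | Conj a b \<Rightarrow> (code a \<in> Pp M \<and> code b \<in> Pp M) \<or> (code a \<in> Tp M \<and> code b \<in> Pp M)
                   \<or> (code b \<in> Tp M \<and> code a \<in> Pp M)
     | Disj a b \<Rightarrow> (code a \<in> Pp M \<and> code b \<in> Pp M) \<or> (code a \<in> Tn M \<and> code b \<in> Pp M)
                   \<or> (code b \<in> Tn M \<and> code a \<in> Pp M)
     | All v a \<Rightarrow> (\<exists>n. code (subst v (num n) a) \<in> Pp M) \<and>
                   (\<forall>n. code (subst v (num n) a) \<in> Pp M \<or> code (subst v (num n) a) \<in> Tp M)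
     | Ex v a \<Rightarrow> (\<exists>n. code (subst v (num n) a) \<in> Pp M) \<and>
                   (\<forall>n. code (subst v (num n) a) \<in> Pp M \<or> code (subst v (num n) a) \<in> Tn M)
     | _ \<Rightarrow> False)"

definition jump :: "model \<Rightarrow> model" where
  "jump M =
    (({code \<phi> | \<phi>. sentence \<phi> \<and> sat M \<phi>}, {code \<phi> | \<phi>. sentence \<phi> \<and> sat M (neg \<phi>)}),
     ({code \<phi> | \<phi>. sentence \<phi> \<and> Pcond M \<phi>}, {code \<phi> | \<phi>. sentence \<phi> \<and> sat M (Disj \<phi> (neg \<phi>))}))"

text \<open>Ordinals are represented by elements of well-ordered types: the stage at alpha
  is defined by transfinite recursion along the predecessors of alpha.\<close>

definition munion :: "model set \<Rightarrow> model" where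
  "munion S = ((\<Union> (Tp ` S), \<Union> (Tn ` S)), (\<Union> (Pp ` S), \<Union> (Pn ` S)))"

definition imm_pred :: "'a::wellorder \<Rightarrow> 'a \<Rightarrow> bool" where
  "imm_pred a b \<longleftrightarrow> b < a \<and> (\<forall>c. \<not> (b < c \<and> c < a))"

definition stage :: "'a::wellorder \<Rightarrow> model" where
  "stage = wfrec {(x, y). x < y}
     (\<lambda>f a. if \<exists>b. imm_pred a b then jump (f (THE b. imm_pred a b))
            else munion (f ` {b. b < a}))"

end

theory Submission
  imports Defs
begin

(* PA[SK] is sound for Strong Kleene satisfaction in every consistent partial model: the only
   rule that needs consistency is negation-left, since in a consistent model a formula and its
   De Morgan negation are never satisfied together.  Hence, in a consistent stage, base
   paradoxicality of \<phi> yields \<phi> \<longleftrightarrow> \<not>T\<phi> directly.  If instead \<not>\<phi> is base paradoxical we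
   get \<phi> \<longleftrightarrow> T(\<not>\<phi>), and this is \<not>T\<phi> because every stage satisfies
   #\<phi> \<in> T\<^sup>- \<longleftrightarrow> #\<not>\<phi> \<in> T\<^sup>+: the jump puts codes into T\<^sup>- exactly this way, and unions
   at limit stages preserve the equivalence. *)

fun eval_trm :: "(nat \<Rightarrow> nat) \<Rightarrow> trm \<Rightarrow> nat" where
  "eval_trm e (Var n) = e n"
| "eval_trm e Zer = 0"
| "eval_trm e (Sc t) = Suc (eval_trm e t)"
| "eval_trm e (Pl s t) = eval_trm e s + eval_trm e t"
| "eval_trm e (Tm s t) = eval_trm e s * eval_trm e t"

text \<open>PA[SK] derives sequents of open formulas, so its soundness is stated for
  satisfaction under environments.\<close>

fun sat_env :: "model \<Rightarrow> (nat \<Rightarrow> nat) \<Rightarrow> fm \<Rightarrow> bool" where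
  "sat_env M e (Eq s t) = (eval_trm e s = eval_trm e t)"
| "sat_env M e (Neq s t) = (eval_trm e s \<noteq> eval_trm e t)"
| "sat_env M e (Tr t) = (eval_trm e t \<in> Tp M)"
| "sat_env M e (NTr t) = (eval_trm e t \<in> Tn M)"
| "sat_env M e (Pr t) = (eval_trm e t \<in> Pp M)"
| "sat_env M e (NPr t) = (eval_trm e t \<in> Pn M)"
| "sat_env M e (Conj a b) = (sat_env M e a \<and> sat_env M e b)"
| "sat_env M e (Disj a b) = (sat_env M e a \<or> sat_env M e b)"
| "sat_env M e (All v a) = (\<forall>n. sat_env M (e(v:=n)) a)"
| "sat_env M e (Ex v a) = (\<exists>n. sat_env M (e(v:=n)) a)"

lemma eval_trm_cong: "\<forall>x\<in>vars_t t. e x = e' x \<Longrightarrow> eval_trm e t = eval_trm e' t"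
  by (induction t) auto

lemma sat_env_cong: "\<forall>x\<in>fv a. e x = e' x \<Longrightarrow> sat_env M e a = sat_env M e' a"
proof (induction a arbitrary: e e')
  case (All v a)
  have "sat_env M (e(v:=n)) a = sat_env M (e'(v:=n)) a" for n
    using All.prems by (intro All.IH) auto
  then show ?case by simp
next
  case (Ex v a)
  have "sat_env M (e(v:=n)) a = sat_env M (e'(v:=n)) a" for n
    using Ex.prems by (intro Ex.IH) auto
  then show ?case by simp
qed (simp_all, (metis Un_iff eval_trm_cong)+)

lemma sat_env_upd_fresh: "w \<notin> fv a \<Longrightarrow> sat_env M (e(w:=n)) a = sat_env M e a"
  by (rule sat_env_cong) auto

lemma eval_trm_subst_t: "eval_trm e (subst_t v u t) = eval_trm (e(v:=eval_trm e u)) t"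
  by (induction t) auto

lemma subst_t_triv: "v \<notin> vars_t t \<Longrightarrow> subst_t v u t = t"
  by (induction t) auto

lemma subst_triv: "v \<notin> fv a \<Longrightarrow> subst v u a = a"
  by (induction a) (auto simp: subst_t_triv)

lemma sat_env_subst_triv:
  "v \<notin> fv a \<Longrightarrow> sat_env M e (subst v u a) = sat_env M (e(v:=eval_trm e u)) a"
  by (simp add: subst_triv sat_env_upd_fresh)

lemma sat_env_subst_under_binder:
  assumes "v \<noteq> w" and "w \<notin> vars_t u"
    and IH: "\<And>e. sat_env M e (subst v u a) = sat_env M (e(v:=eval_trm e u)) a"
  shows "sat_env M (e(w:=n)) (subst v u a) = sat_env M (e(v:=eval_trm e u, w:=n)) a"
proof -
  have "eval_trm (e(w:=n)) u = eval_trm e u"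
    using assms(2) by (intro eval_trm_cong) auto
  then show ?thesis
    using IH[of "e(w:=n)"] assms(1) by (simp add: fun_upd_twist)
qed

lemma sat_env_subst:
  "freefor u v a \<Longrightarrow> sat_env M e (subst v u a) = sat_env M (e(v:=eval_trm e u)) a"
proof (induction a arbitrary: e)
  case (All w a)
  show ?case
  proof (cases "v = w \<or> v \<notin> fv (All w a)")
    case True
    then show ?thesis
      by (metis fun_upd_upd sat_env.simps(9) sat_env_subst_triv subst.simps(9))
  next
    case False
    with All.prems have vw: "v \<noteq> w" and w: "w \<notin> vars_t u" and ff: "freefor u v a"
      by auto
    have "sat_env M (e(w:=n)) (subst v u a) = sat_env M (e(v:=eval_trm e u, w:=n)) a" for n
      by (rule sat_env_subst_under_binder[OF vw w All.IH[OF ff]])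
    with vw show ?thesis
      by (simp add: fun_upd_def)
  qed
next
  case (Ex w a)
  show ?case
  proof (cases "v = w \<or> v \<notin> fv (Ex w a)")
    case True
    then show ?thesis
      by (metis fun_upd_upd sat_env.simps(10) sat_env_subst_triv subst.simps(10))
  next
    case False
    with Ex.prems have vw: "v \<noteq> w" and w: "w \<notin> vars_t u" and ff: "freefor u v a"
      by auto
    have "sat_env M (e(w:=n)) (subst v u a) = sat_env M (e(v:=eval_trm e u, w:=n)) a" for n
      by (rule sat_env_subst_under_binder[OF vw w Ex.IH[OF ff]])
    with vw show ?thesis
      by (simp add: fun_upd_def)
  qed
qed (simp_all add: eval_trm_subst_t)

lemma sat_env_subst_Var:
  assumes "freefor (Var w) v a" and "w \<notin> fv a - {v}"
  shows "sat_env M (e(w:=n)) (subst v (Var w) a) = sat_env M (e(v:=n)) a"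
proof -
  have "sat_env M (e(w:=n)) (subst v (Var w) a) = sat_env M (e(w:=n, v:=n)) a"
    using assms(1) by (simp add: sat_env_subst)
  also have "\<dots> = sat_env M (e(v:=n)) a"
    using assms(2) by (cases "w = v") (auto simp: fun_upd_twist sat_env_upd_fresh)
  finally show ?thesis .
qed

lemma neg_neg [simp]: "neg (neg a) = a"
  by (induction a) auto

lemma fv_neg [simp]: "fv (neg a) = fv a"
  by (induction a) auto

lemma consistent_sat_env_neg: "consistent M \<Longrightarrow> sat_env M e (neg a) \<Longrightarrow> \<not> sat_env M e a"
  by (induction a arbitrary: e) (auto simp: consistent_def)

lemma vars_t_num [simp]: "vars_t (num n) = {}"
  by (induction n) auto

lemma val_num [simp]: "val (num n) = n"
  by (induction n) auto

lemma eval_trm_num [simp]: "eval_trm e (num n) = n"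
  by (induction n) auto

lemma freefor_ground: "vars_t u = {} \<Longrightarrow> freefor u v a"
  by (induction u v a rule: freefor.induct) auto

lemma eval_trm_zero_env: "eval_trm (\<lambda>_. 0) t = val t"
  by (induction t) auto

lemma sat_eq_sat_env_zero: "sat M a = sat_env M (\<lambda>_. 0) a"
proof (induction M a rule: sat.induct)
  case (9 M v a)
  then show ?case by (simp add: sat_env_subst freefor_ground)
next
  case (10 M v a)
  then show ?case by (simp add: sat_env_subst freefor_ground)
qed (simp_all add: eval_trm_zero_env)

lemma sat_env_fresh_context:
  "w \<notin> fvs \<Gamma> \<Longrightarrow> \<phi> \<in> \<Gamma> \<Longrightarrow> sat_env M (e(w:=n)) \<phi> = sat_env M e \<phi>"
  by (rule sat_env_upd_fresh) (auto simp: fvs_def)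

lemma pask_sound_induction_rule:
  assumes fresh: "v \<notin> fvs \<Gamma>" "v \<notin> fvs \<Delta>"
    and ff: "freefor t v a" "freefor (Sc (Var v)) v a"
    and step: "\<And>e. \<forall>\<phi>\<in>insert a \<Gamma>. sat_env M e \<phi> \<Longrightarrow>
                    \<exists>\<psi>\<in>insert (subst v (Sc (Var v)) a) \<Delta>. sat_env M e \<psi>"
    and base: "\<forall>\<phi>\<in>insert (subst v Zer a) \<Gamma>. sat_env M e \<phi>"
  shows "\<exists>\<psi>\<in>insert (subst v t a) \<Delta>. sat_env M e \<psi>"
proof (rule ccontr)
  assume refuted: "\<not> (\<exists>\<psi>\<in>insert (subst v t a) \<Delta>. sat_env M e \<psi>)"
  have \<Gamma>: "\<forall>\<phi>\<in>\<Gamma>. sat_env M (e(v:=k)) \<phi>" for k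
    using base sat_env_fresh_context[OF fresh(1)] by blast
  have \<Delta>: "\<not> (\<exists>\<psi>\<in>\<Delta>. sat_env M (e(v:=k)) \<psi>)" for k
    using refuted sat_env_fresh_context[OF fresh(2)] by blast
  have "sat_env M (e(v:=k)) a" for k
  proof (induction k)
    case 0
    then show ?case
      using base by (simp add: sat_env_subst freefor_ground fun_upd_def)
  next
    case (Suc k)
    then have "sat_env M (e(v:=k)) (subst v (Sc (Var v)) a)"
      using step[of "e(v:=k)"] \<Gamma> \<Delta> by blast
    then have "sat_env M (e(v:=Suc k)) a"
      using ff(2) by (simp add: sat_env_subst)
    then show ?case
      by (simp add: fun_upd_def)
  qed
  then have "sat_env M e (subst v t a)"
    using ff(1) by (simp add: sat_env_subst)
  then show False
    using refuted by blast
qed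

theorem pask_sound:
  "pask \<Gamma> \<Delta> \<Longrightarrow> consistent M \<Longrightarrow> \<forall>\<phi>\<in>\<Gamma>. sat_env M e \<phi> \<Longrightarrow> \<exists>\<psi>\<in>\<Delta>. sat_env M e \<psi>"
proof (induction arbitrary: e rule: pask.induct)
  case (negL \<Gamma> \<phi> \<Delta>)
  then show ?case using consistent_sat_env_neg by blast
next
  case (allR w v a \<Gamma> \<Delta>)
  show ?case
  proof (cases "\<exists>\<psi>\<in>\<Delta>. sat_env M e \<psi>")
    case False
    have "sat_env M (e(v:=n)) a" for n
    proof -
      have "\<forall>\<phi>\<in>\<Gamma>. sat_env M (e(w:=n)) \<phi>"
        using allR.prems(2) sat_env_fresh_context[OF allR.hyps(2)] by blast
      moreover have "\<not> (\<exists>\<psi>\<in>\<Delta>. sat_env M (e(w:=n)) \<psi>)"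
        using False sat_env_fresh_context[OF allR.hyps(3)] by blast
      ultimately have "sat_env M (e(w:=n)) (subst v (Var w) a)"
        using allR.IH allR.prems(1) by blast
      then show ?thesis
        using allR.hyps(1,4) by (simp add: sat_env_subst_Var)
    qed
    then show ?thesis by simp
  qed blast
next
  case (exL w v a \<Gamma> \<Delta>)
  obtain n where "sat_env M (e(v:=n)) a"
    using exL.prems(2) by auto
  then have "sat_env M (e(w:=n)) (subst v (Var w) a)"
    using exL.hyps(1,4) by (simp add: sat_env_subst_Var)
  moreover have "\<forall>\<phi>\<in>\<Gamma>. sat_env M (e(w:=n)) \<phi>"
    using exL.prems(2) sat_env_fresh_context[OF exL.hyps(2)] by blast
  ultimately have "\<exists>\<psi>\<in>\<Delta>. sat_env M (e(w:=n)) \<psi>"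
    using exL.IH exL.prems(1) by blast
  then show ?case
    using sat_env_fresh_context[OF exL.hyps(3)] by blast
next
  case (allL t v a \<Gamma> \<Delta>)
  then show ?case by (auto simp: sat_env_subst)
next
  case (exR t v a \<Gamma> \<Delta>)
  then show ?case by (auto simp: sat_env_subst)
next
  case (repl t v a s \<Gamma> \<Delta>)
  then show ?case
    by (cases "eval_trm e s = eval_trm e t") (auto simp: sat_env_subst)
next
  case (ind_rule v \<Gamma> \<Delta> t a)
  have step: "\<exists>\<psi>\<in>insert (subst v (Sc (Var v)) a) \<Delta>. sat_env M e' \<psi>"
    if "\<forall>\<phi>\<in>insert a \<Gamma>. sat_env M e' \<phi>" for e'
    using ind_rule.IH ind_rule.prems(1) that by blast
  show ?case
    by (rule pask_sound_induction_rule[OF ind_rule.hyps(1-4) step ind_rule.prems(2)])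
qed auto

corollary pask_sound_sat:
  "pask {a} {b} \<Longrightarrow> consistent M \<Longrightarrow> sat M a \<Longrightarrow> sat M b"
  using pask_sound[of "{a}" "{b}" M "\<lambda>_. 0"] by (simp add: sat_eq_sat_env_zero)

lemma code_t_inject: "code_t s = code_t t \<Longrightarrow> s = t"
proof (induction s arbitrary: t)
qed (case_tac t; simp add: prod_encode_eq)+

lemma code_inject: "code a = code b \<Longrightarrow> a = b"
proof (induction a arbitrary: b)
qed (case_tac b; auto simp: prod_encode_eq dest: code_t_inject)+

lemma Tn_jump_iff: "code \<phi> \<in> Tn (jump M) \<longleftrightarrow> code (neg \<phi>) \<in> Tp (jump M)"
  unfolding jump_def Tn_def Tp_def sentence_def
  by (auto dest!: code_inject)

lemma stage_jump_or_munion: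
  "(\<exists>M. stage \<alpha> = jump M) \<or> stage \<alpha> = munion (stage ` {\<beta>. \<beta> < \<alpha>})"
proof -
  let ?R = "{(x::'a, y). x < y}"
  have "stage \<alpha> = (if \<exists>\<beta>. imm_pred \<alpha> \<beta> then jump (cut stage ?R \<alpha> (THE \<beta>. imm_pred \<alpha> \<beta>))
                    else munion (cut stage ?R \<alpha> ` {\<beta>. \<beta> < \<alpha>}))"
    unfolding stage_def by (rule wfrec) (simp add: wf)
  moreover have "cut stage ?R \<alpha> ` {\<beta>. \<beta> < \<alpha>} = stage ` {\<beta>. \<beta> < \<alpha>}"
    by (auto simp: cut_apply)
  ultimately show ?thesis
    by (metis (no_types, lifting))
qed

lemma Tn_stage_iff: "code \<phi> \<in> Tn (stage \<alpha>) \<longleftrightarrow> code (neg \<phi>) \<in> Tp (stage \<alpha>)"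
proof (induction \<alpha> arbitrary: \<phi> rule: less_induct)
  case (less \<alpha>)
  from stage_jump_or_munion[of \<alpha>] show ?case
  proof
    assume "\<exists>M. stage \<alpha> = jump M"
    then show ?thesis using Tn_jump_iff by auto
  next
    assume "stage \<alpha> = munion (stage ` {\<beta>. \<beta> < \<alpha>})"
    then show ?thesis
      using less by (simp add: munion_def Tn_def Tp_def)
  qed
qed

theorem mainTheorem5:
  fixes \<alpha> :: "'a::wellorder" and \<phi> :: fm
  assumes "sentence \<phi>"
    and "Pi \<phi>"
    and "consistent (stage \<alpha>)"
  shows "holds (stage \<alpha>) [\<phi>] [neg (Tr (quote \<phi>))] \<and> holds (stage \<alpha>) [neg (Tr (quote \<phi>))] [\<phi>]"
proof -
  let ?M = "stage \<alpha>"
  note sound = pask_sound_sat[OF _ assms(3)]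
  have "sat ?M \<phi> \<longleftrightarrow> code \<phi> \<in> Tn ?M"
    using assms(2) unfolding Pi_def
  proof
    assume "base_paradoxical \<phi>"
    then show ?thesis
      using sound[of \<phi> "neg (Tr (quote \<phi>))"] sound[of "neg (Tr (quote \<phi>))" \<phi>]
      by (auto simp: base_paradoxical_def quote_def)
  next
    assume "base_paradoxical (neg \<phi>)"
    then have "sat ?M \<phi> \<longleftrightarrow> code (neg \<phi>) \<in> Tp ?M"
      using sound[of \<phi> "Tr (quote (neg \<phi>))"] sound[of "Tr (quote (neg \<phi>))" \<phi>]
      by (auto simp: base_paradoxical_def quote_def)
    then show ?thesis
      using Tn_stage_iff by blast
  qed
  then show ?thesis
    by (auto simp: holds_def quote_def)
qed

end
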